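(* For every $c\geq 2$ let $L_c=(1,2,c)$. Then $\lim_{c\to\infty}\rho_{2,L_c}=\frac16$.
   Context: Let $X$ be a finite alphabet with $n\geq 2$ letters and $X^*$ the set of words over $X$; $|v|$ is the length of a word $v$. A code over $X$ is a finite sequence $C=(v_1,\ldots,v_m)$ of words over $X$ such that every $w\in X^*$ has at most one factorization into code-words: if $w=v_{i_1}\cdots v_{i_l}=v_{j_1}\cdots v_{j_{l'}}$ with $l,l'\geq1$, then $l=l'$ and $i_t=j_t$ for all $t$. (Codes are sequences, not sets.) A code $C=(v_1,\ldots,v_m)$ is a prefix code if for all $i,j$, $v_i$ is a prefix of $v_j$ if and only if $i=j$. For a finite sequence $L=(a_1,\ldots,a_m)$ of positive integers, $UD_n(L)$ is the set of all codes $(v_1,\ldots,v_m)$ over an $n$-letter alphabet with $|v_i|=a_i$ for all $i$, $PR_n(L)\subseteq UD_n(L)$ is the subset of prefix codes, and $\rho_{n,L}=|PR_n(L)|/|UD_n(L)|$ (defined when $UD_n(L)\ne\emptyset$). *)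

theory Defs
  imports "HOL-Analysis.Analysis" "HOL-Library.Sublist"
begin

definition word_over :: "nat \<Rightarrow> nat list \<Rightarrow> bool" where
  "word_over n w \<longleftrightarrow> (\<forall>x\<in>set w. x < n)"

definition is_code :: "nat \<Rightarrow> nat list list \<Rightarrow> bool" where
  "is_code n C \<longleftrightarrow> (\<forall>v\<in>set C. word_over n v) \<and>
     (\<forall>is js. is \<noteq> [] \<longrightarrow> js \<noteq> [] \<longrightarrow>
        (\<forall>i\<in>set is. i < length C) \<longrightarrow> (\<forall>j\<in>set js. j < length C) \<longrightarrow>
        concat (map (\<lambda>i. C ! i) is) = concat (map (\<lambda>j. C ! j) js) \<longrightarrow> is = js)"

definition is_prefix_code :: "nat \<Rightarrow> nat list list \<Rightarrow> bool" where
  "is_prefix_code n C \<longleftrightarrow> is_code n C \<and>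
     (\<forall>i<length C. \<forall>j<length C. prefix (C ! i) (C ! j) \<longleftrightarrow> i = j)"

definition UD :: "nat \<Rightarrow> nat list \<Rightarrow> nat list list set" where
  "UD n L = {C. length C = length L \<and> (\<forall>i<length L. length (C ! i) = L ! i) \<and> is_code n C}"

definition PR :: "nat \<Rightarrow> nat list \<Rightarrow> nat list list set" where
  "PR n L = {C \<in> UD n L. is_prefix_code n C}"

definition rho :: "nat \<Rightarrow> nat list \<Rightarrow> real" where
  "rho n L = real (card (PR n L)) / real (card (UD n L))"

end

theory Submission
  imports Defs
begin

text \<open>The prefix codes with word lengths \<open>(1, 2, c)\<close> over \<open>{a, b}\<close> are exactly
  \<open>(a, bq, bq't)\<close> with \<open>{q, q'} = {a, b}\<close>, so there are \<open>2^c\<close> of them. A uniquely decodable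
  code \<open>(x, y, w)\<close> needs \<open>y \<noteq> xx\<close>, which leaves at most \<open>6 \<cdot> 2^c\<close> of them. Conversely, for
  each of the six admissible pairs \<open>(x, y)\<close> there is a marker of length at most 3 (\<open>bb\<close>, or
  \<open>aba\<close> when \<open>y = bb\<close>) that no concatenation of \<open>x\<close> and \<open>y\<close> contains; once \<open>w\<close> contains it,
  the leftmost occurrence of the marker locates every copy of \<open>w\<close> in a concatenation, and the
  code is uniquely decodable. At most \<open>(7/8)^(c div 3) \<cdot> 2^c\<close> words \<open>w\<close> avoid the marker,
  hence \<open>|UD| / 2^c \<longrightarrow> 6\<close> and \<open>\<rho> \<longrightarrow> 1/6\<close>.\<close>

definition encode :: "'a list list \<Rightarrow> nat list \<Rightarrow> 'a list" where
  "encode C ks = concat (map ((!) C) ks)"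

lemma encode_simps [simp]:
  "encode C [] = []"
  "encode C (i # ks) = C ! i @ encode C ks"
  "encode C (ks @ ls) = encode C ks @ encode C ls"
  by (simp_all add: encode_def)

lemma encode_append_code:
  "set ks \<subseteq> {..<length C} \<Longrightarrow> encode (C @ D) ks = encode C ks"
  by (induction ks) (auto simp: nth_append)

lemma encode_map_rev:
  "set ks \<subseteq> {..<length C} \<Longrightarrow> encode (map rev C) (rev ks) = rev (encode C ks)"
  by (induction ks) auto

definition uniquely_decodable :: "'a list list \<Rightarrow> bool" where
  "uniquely_decodable C \<longleftrightarrow> inj_on (encode C) {ks. set ks \<subseteq> {..<length C}}"

lemma is_code_if_uniquely_decodable:
  "\<forall>v\<in>set C. word_over n v \<Longrightarrow> uniquely_decodable C \<Longrightarrow> is_code n C"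
  unfolding is_code_def uniquely_decodable_def inj_on_def encode_def by (auto simp: subset_iff)

lemma uniquely_decodable_if_map_rev:
  assumes "uniquely_decodable (map rev C)"
  shows "uniquely_decodable C"
  unfolding uniquely_decodable_def
proof (rule inj_onI)
  fix ks ls
  assume "ks \<in> {ks. set ks \<subseteq> {..<length C}}" "ls \<in> {ks. set ks \<subseteq> {..<length C}}"
    and "encode C ks = encode C ls"
  then have "encode (map rev C) (rev ks) = encode (map rev C) (rev ls)"
    by (simp add: encode_map_rev)
  then have "rev ks = rev ls"
    by (rule inj_onD[OF assms[unfolded uniquely_decodable_def]]) (use \<open>ks \<in> _\<close> \<open>ls \<in> _\<close> in auto)
  then show "ks = ls" by simp
qed

lemma uniquely_decodable_if_prefix_free:
  assumes nonempty: "\<forall>i<length C. C ! i \<noteq> []"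
    and prefix_free: "\<forall>i<length C. \<forall>j<length C. prefix (C ! i) (C ! j) \<longrightarrow> i = j"
  shows "uniquely_decodable C"
proof -
  have "ks = ls" if "set ks \<subseteq> {..<length C}" "set ls \<subseteq> {..<length C}" "encode C ks = encode C ls"
    for ks ls
    using that
  proof (induction ks arbitrary: ls)
    case Nil
    then show ?case using nonempty by (cases ls) auto
  next
    case (Cons i ks)
    then obtain j ls' where ls: "ls = j # ls'" using nonempty by (cases ls) auto
    have eq: "C ! i @ encode C ks = C ! j @ encode C ls'" using Cons.prems ls by simp
    then have "prefix (C ! i) (C ! j) \<or> prefix (C ! j) (C ! i)"
      by (metis prefixI prefix_same_cases)
    then have "i = j" using prefix_free Cons.prems ls by auto
    then show ?case using Cons ls eq by auto
  qed
  then show ?thesis unfolding uniquely_decodable_def by (auto intro: inj_onI)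
qed

lemma is_prefix_code_if_prefix_free:
  assumes "\<forall>v\<in>set C. word_over n v" "\<forall>i<length C. C ! i \<noteq> []"
    and "\<forall>i<length C. \<forall>j<length C. prefix (C ! i) (C ! j) \<longrightarrow> i = j"
  shows "is_prefix_code n C"
  using assms is_code_if_uniquely_decodable[OF _ uniquely_decodable_if_prefix_free]
  unfolding is_prefix_code_def by auto

inductive_set star2 :: "'a list \<Rightarrow> 'a list \<Rightarrow> 'a list set" for x y where
  empty: "[] \<in> star2 x y"
| append_fst: "v \<in> star2 x y \<Longrightarrow> x @ v \<in> star2 x y"
| append_snd: "v \<in> star2 x y \<Longrightarrow> y @ v \<in> star2 x y"

lemma encode_in_star2: "set ks \<subseteq> {0, 1} \<Longrightarrow> encode (x # y # C) ks \<in> star2 x y"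
  by (induction ks) (auto intro: star2.intros)

locale prefix_free_pair =
  fixes x y :: "'a list"
  assumes x_nonempty: "x \<noteq> []" and y_nonempty: "y \<noteq> []"
    and not_prefix_xy: "\<not> prefix x y" and not_prefix_yx: "\<not> prefix y x"
begin

lemma uniquely_decodable: "uniquely_decodable [x, y]"
  by (rule uniquely_decodable_if_prefix_free)
    (use x_nonempty y_nonempty not_prefix_xy not_prefix_yx in \<open>auto simp: less_Suc_eq\<close>)

lemma star2_strip:
  assumes "z \<in> {x, y}" "z @ v \<in> star2 x y"
  shows "v \<in> star2 x y"
  using assms(2)
proof cases
  case empty
  then show ?thesis using assms(1) x_nonempty y_nonempty by auto
next
  case (append_fst v')
  then have "prefix z x \<or> prefix x z" by (metis prefixI prefix_same_cases)
  then have "z = x" using assms(1) not_prefix_xy not_prefix_yx by auto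
  then show ?thesis using append_fst by simp
next
  case (append_snd v')
  then have "prefix z y \<or> prefix y z" by (metis prefixI prefix_same_cases)
  then have "z = y" using assms(1) not_prefix_xy not_prefix_yx by auto
  then show ?thesis using append_snd by simp
qed

lemma star2_cancel_left: "A \<in> star2 x y \<Longrightarrow> A @ u \<in> star2 x y \<Longrightarrow> u \<in> star2 x y"
  by (induction A rule: star2.induct) (auto intro: star2_strip)

end

lemma leftmost_occurrence:
  assumes "sublist P w" "P \<noteq> []"
  shows "\<exists>w1 w2. w = w1 @ P @ w2 \<and> \<not> sublist P (w1 @ butlast P)"
  using assms
proof (induction w)
  case Nil
  then show ?case by simp
next
  case (Cons c w)
  show ?case
  proof (cases "prefix P (c # w)")
    case True
    then obtain w2 where "c # w = P @ w2" by (auto simp: prefix_def)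
    moreover have "\<not> sublist P (butlast P)"
      using sublist_length_le[of P "butlast P"] \<open>P \<noteq> []\<close> by (cases P) auto
    ultimately show ?thesis by (intro exI[of _ "[]"] exI[of _ w2]) (simp del: append_Cons)
  next
    case False
    then have "sublist P w" using Cons.prems(1) by (simp add: sublist_Cons_right)
    then obtain w1 w2 where w: "w = w1 @ P @ w2" "\<not> sublist P (w1 @ butlast P)"
      using Cons.IH Cons.prems(2) by blast
    have "prefix (c # w1 @ butlast P) (c # w)"
      using w(1) prefixeq_butlast prefix_prefix by fastforce
    then have "\<not> prefix P (c # w1 @ butlast P)" using False prefix_order.trans by blast
    then have "\<not> sublist P (c # w1 @ butlast P)" using w(2) by (simp add: sublist_Cons_right)
    then show ?thesis using w(1) by (intro exI[of _ "c # w1"] exI[of _ w2]) auto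
  qed
qed

text \<open>If a word \<open>w\<close> reappears shifted by \<open>u \<noteq> []\<close>, the copy of the leftmost occurrence of
  \<open>P\<close> in the shifted \<open>w\<close> cannot start inside the unshifted \<open>w1\<close>, so it lies in \<open>u\<close> or
  straddles the end of \<open>u\<close>.\<close>
lemma shifted_leftmost_occurrence:
  assumes w: "w = w1 @ P @ w2" and leftmost: "\<not> sublist P (w1 @ butlast P)"
    and "P \<noteq> []" "u \<noteq> []" and shift: "w @ S = u @ w @ S'"
  shows "sublist P u \<or> (\<exists>p1 p2. P = p1 @ p2 \<and> p1 \<noteq> [] \<and> p2 \<noteq> [] \<and> suffix p1 u \<and> prefix p2 w)"
proof -
  have u_prefix: "prefix u (w @ S)" using shift by simp
  have w1_prefix: "prefix w1 (w @ S)" using w by simp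
  show ?thesis
  proof (cases "length u \<le> length w1")
    case True
    then obtain r where r: "w1 = u @ r"
      using prefix_length_prefix[OF u_prefix w1_prefix] by (auto simp: prefix_def)
    with shift w have shift_back: "r @ P @ w2 @ S = w1 @ P @ w2 @ S'" by simp
    have "prefix (r @ P) (w1 @ butlast P)"
    proof (rule prefix_length_prefix)
      show "prefix (r @ P) (w1 @ P @ w2 @ S')" unfolding shift_back[symmetric] by simp
      show "prefix (w1 @ butlast P) (w1 @ P @ w2 @ S')"
        using prefixeq_butlast prefix_prefix by fastforce
      show "length (r @ P) \<le> length (w1 @ butlast P)" using r \<open>u \<noteq> []\<close> \<open>P \<noteq> []\<close> by (cases u) auto
    qed
    then have "sublist P (w1 @ butlast P)" by (auto simp: prefix_def)
    with leftmost show ?thesis by simp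
  next
    case False
    then obtain q where q: "u = w1 @ q"
      using prefix_length_prefix[OF w1_prefix u_prefix] by (auto simp: prefix_def)
    with shift w have P_q: "P @ w2 @ S = q @ w @ S'" by simp
    have P_prefix: "prefix P (q @ w @ S')" and q_prefix: "prefix q (q @ w @ S')"
      using P_q by (metis prefixI)+
    show ?thesis
    proof (cases "length P \<le> length q")
      case True
      then obtain t where "q = P @ t"
        using prefix_length_prefix[OF P_prefix q_prefix] by (auto simp: prefix_def)
      then have "sublist P u" using q by auto
      then show ?thesis ..
    next
      case False
      then obtain p2 where p2: "P = q @ p2"
        using prefix_length_prefix[OF q_prefix P_prefix] by (auto simp: prefix_def)
      with P_q have "p2 @ w2 @ S = w @ S'" by simp
      then have "prefix p2 (w @ S')" by (metis prefixI)
      moreover have "length p2 \<le> length w" using p2 w by simp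
      ultimately have "prefix p2 w" using prefix_length_prefix[of p2 "w @ S'" w] by simp
      moreover have "q \<noteq> []" "p2 \<noteq> []" using False \<open>\<not> length u \<le> length w1\<close> q p2 by auto
      ultimately show ?thesis using p2 q by (auto simp: suffix_def)
    qed
  qed
qed

text \<open>\<open>P\<close> is a factor of \<open>w\<close> that occurs in no concatenation of \<open>x\<close> and \<open>y\<close>, not even across
  the boundary between such a concatenation and a following \<open>w\<close>.\<close>
locale marked_triple = prefix_free_pair +
  fixes P w :: "'a list"
  assumes marker_nonempty: "P \<noteq> []"
    and marker_in_word: "sublist P w"
    and marker_not_in_star2: "v \<in> star2 x y \<Longrightarrow> \<not> sublist P v"
    and marker_no_straddle: "\<lbrakk>u \<in> star2 x y; prefix u (w @ z); P = p1 @ p2; p1 \<noteq> []; p2 \<noteq> [];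
      suffix p1 u; prefix p2 w\<rbrakk> \<Longrightarrow> False"
begin

lemma star2_synchronizes:
  assumes "A \<in> star2 x y" "A' \<in> star2 x y" "A @ w @ S = A' @ w @ S'"
  shows "A = A'"
proof -
  have "A = A'" if A: "A \<in> star2 x y" "A' \<in> star2 x y" and eq: "A @ w @ S = A' @ w @ S'"
    and le: "length A \<le> length A'" for A A' S S'
  proof -
    obtain u where u: "A' = A @ u"
      using eq le by (metis append_eq_append_conv_if append_take_drop_id)
    then have "u \<in> star2 x y" using A star2_cancel_left by blast
    have shift: "w @ S = u @ w @ S'" using eq u by simp
    obtain w1 w2 where w: "w = w1 @ P @ w2" "\<not> sublist P (w1 @ butlast P)"
      using leftmost_occurrence[OF marker_in_word marker_nonempty] by blast
    have "u = []"
    proof (rule ccontr)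
      assume "u \<noteq> []"
      from shifted_leftmost_occurrence[OF w marker_nonempty this shift]
      show False
        using marker_not_in_star2 marker_no_straddle \<open>u \<in> star2 x y\<close> shift
        by (metis prefixI)
    qed
    then show ?thesis using u by simp
  qed
  from this[of A A' S S'] this[of A' A S' S] assms show ?thesis by (metis nat_le_linear)
qed

lemma uniquely_decodable_triple: "uniquely_decodable [x, y, w]"
proof -
  let ?C = "[x, y, w]"
  have binary: "set ks \<subseteq> {0, 1}" if "set ks \<subseteq> {..<3::nat}" "2 \<notin> set ks" for ks
    using that by (auto simp: subset_iff eval_nat_numeral less_Suc_eq)
  have in_star2: "encode ?C ks \<in> star2 x y" if "set ks \<subseteq> {..<3}" "2 \<notin> set ks" for ks
    using encode_in_star2 binary that by blast
  have has_marker: "sublist P (encode ?C ks)" if w_used: "2 \<in> set ks" for ks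
  proof -
    obtain ks1 ks2 where "ks = ks1 @ 2 # ks2" using split_list[OF w_used] by blast
    then show ?thesis using marker_in_word by (auto intro: sublist_order.order.trans)
  qed
  have without_w: "ks = ls"
    if "set ks \<subseteq> {..<3}" "set ls \<subseteq> {..<3}" "2 \<notin> set ks" "2 \<notin> set ls"
      "encode ?C ks = encode ?C ls" for ks ls
  proof -
    have "set ks \<subseteq> {..<length [x, y]}" "set ls \<subseteq> {..<length [x, y]}"
      using binary that by auto
    moreover have "encode [x, y] ks = encode [x, y] ls"
      using that(5) calculation encode_append_code[of _ "[x, y]" "[w]"] by simp
    ultimately show ?thesis using uniquely_decodable unfolding uniquely_decodable_def
      by (auto dest: inj_onD)
  qed
  have "ks = ls" if "set ks \<subseteq> {..<3}" "set ls \<subseteq> {..<3}" "encode ?C ks = encode ?C ls" for ks ls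
    using that
  proof (induction ks arbitrary: ls rule: length_induct)
    case (1 ks)
    show ?case
    proof (cases "2 \<in> set ks \<or> 2 \<in> set ls")
      case False
      then show ?thesis using "1.prems" without_w by blast
    next
      case True
      then have "2 \<in> set ks" "2 \<in> set ls"
        using "1.prems" in_star2 has_marker marker_not_in_star2 by metis+
      then obtain ks1 ks2 ls1 ls2 where ks: "ks = ks1 @ 2 # ks2" "2 \<notin> set ks1"
        and ls: "ls = ls1 @ 2 # ls2" "2 \<notin> set ls1"
        by (metis split_list_first)
      have split_eq: "encode ?C ks1 @ w @ encode ?C ks2 = encode ?C ls1 @ w @ encode ?C ls2"
        using "1.prems"(3) ks ls by simp
      moreover have "encode ?C ks1 \<in> star2 x y" "encode ?C ls1 \<in> star2 x y"
        using "1.prems" ks ls in_star2 by auto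
      ultimately have heads: "encode ?C ks1 = encode ?C ls1"
        using star2_synchronizes by blast
      with split_eq have tails: "encode ?C ks2 = encode ?C ls2" by simp
      have "ks1 = ls1" using without_w heads "1.prems" ks ls by auto
      moreover have "ks2 = ls2" using "1.IH" tails "1.prems" ks ls by auto
      ultimately show ?thesis using ks ls by simp
    qed
  qed
  then have "inj_on (encode ?C) {ks. set ks \<subseteq> {..<3}}" by (auto intro: inj_onI)
  then show ?thesis unfolding uniquely_decodable_def by (simp add: numeral_3_eq_3)
qed

end

lemma nonempty_split_two:
  "p1 @ p2 = [c, d] \<Longrightarrow> p1 \<noteq> [] \<Longrightarrow> p2 \<noteq> [] \<Longrightarrow> p1 = [c] \<and> p2 = [d]"
  by (cases p1; cases p2) (auto simp: append_eq_Cons_conv)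

lemma nonempty_split_three:
  "p1 @ p2 = [c, d, e] \<Longrightarrow> p1 \<noteq> [] \<Longrightarrow> p2 \<noteq> [] \<Longrightarrow>
    (p1 = [c] \<and> p2 = [d, e]) \<or> (p1 = [c, d] \<and> p2 = [e])"
  by (cases p1; cases p2) (auto simp: append_eq_Cons_conv)

lemma star2_a_ba:
  assumes "v \<in> star2 [a] [b, a]" "a \<noteq> b"
  shows "\<not> sublist [b, b] v \<and> (v \<noteq> [] \<longrightarrow> last v = a)"
  using assms by (induction v rule: star2.induct) (auto simp: sublist_Cons_right)

lemma uniquely_decodable_a_ba:
  assumes "a \<noteq> b" "sublist [b, b] w"
  shows "uniquely_decodable [[a], [b, a], w]"
proof -
  interpret marked_triple "[a]" "[b, a]" "[b, b]" w
  proof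
    fix u z p1 p2
    assume "u \<in> star2 [a] [b, a]" "[b, b] = p1 @ p2" "p1 \<noteq> []" "p2 \<noteq> []" "suffix p1 u"
    then show False
      using nonempty_split_two[of p1 p2 b b] star2_a_ba \<open>a \<noteq> b\<close> by (fastforce simp: suffix_def)
  qed (use assms star2_a_ba[of _ a b] in auto)
  show ?thesis by (rule uniquely_decodable_triple)
qed

lemma uniquely_decodable_a_ab:
  assumes "a \<noteq> b" "sublist [b, b] w"
  shows "uniquely_decodable [[a], [a, b], w]"
proof (rule uniquely_decodable_if_map_rev)
  have "sublist [b, b] (rev w)" using assms(2) by (simp add: sublist_rev_right)
  then show "uniquely_decodable (map rev [[a], [a, b], w])"
    using uniquely_decodable_a_ba[OF assms(1)] by simp
qed

lemma star2_a_bb: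
  assumes "v \<in> star2 [a] [b, b]" "a \<noteq> b"
  shows "\<not> sublist [a, b, a] v \<and> (v = [] \<or> hd v = a \<or> take 2 v = [b, b])
    \<and> (\<forall>zs. v \<noteq> zs @ [a, b]) \<and> v \<noteq> [b]"
  using assms
proof (induction v rule: star2.induct)
  case (append_fst v)
  then show ?case by (cases v) (auto simp: sublist_Cons_right Cons_eq_append_conv)
next
  case (append_snd v)
  then show ?case by (cases v) (auto simp: sublist_Cons_right Cons_eq_append_conv)
qed simp

lemma uniquely_decodable_a_bb:
  assumes "a \<noteq> b" "sublist [a, b, a] w"
  shows "uniquely_decodable [[a], [b, b], w]"
proof -
  interpret marked_triple "[a]" "[b, b]" "[a, b, a]" w
  proof
    fix u z p1 p2
    assume u: "u \<in> star2 [a] [b, b]" and "prefix u (w @ z)" "[a, b, a] = p1 @ p2"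
      "p1 \<noteq> []" "p2 \<noteq> []" "suffix p1 u" "prefix p2 w"
    note u_shape = star2_a_bb[OF u \<open>a \<noteq> b\<close>]
    have "(p1 = [a] \<and> p2 = [b, a]) \<or> (p1 = [a, b] \<and> p2 = [a])"
      using nonempty_split_three[of p1 p2 a b a] \<open>[a, b, a] = p1 @ p2\<close> \<open>p1 \<noteq> []\<close> \<open>p2 \<noteq> []\<close>
      by simp
    then show False
    proof (elim disjE conjE)
      assume "p1 = [a]" "p2 = [b, a]"
      then obtain w' where "w = b # a # w'" using \<open>prefix p2 w\<close> by (auto simp: prefix_def)
      then have "prefix u (b # a # w' @ z)" using \<open>prefix u (w @ z)\<close> by simp
      moreover have "u \<noteq> []" using \<open>suffix p1 u\<close> \<open>p1 = [a]\<close> by (auto simp: suffix_def)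
      ultimately show False using u_shape \<open>a \<noteq> b\<close>
        by (cases u; cases "tl u") (auto simp: prefix_def Cons_eq_append_conv)
    next
      assume "p1 = [a, b]" "p2 = [a]"
      then show False using u_shape \<open>suffix p1 u\<close> by (auto simp: suffix_def)
    qed
  qed (use assms star2_a_bb[of _ a b] in auto)
  show ?thesis by (rule uniquely_decodable_triple)
qed

definition words :: "nat \<Rightarrow> nat \<Rightarrow> nat list set" where
  "words n k = {w. word_over n w \<and> length w = k}"

lemma words_eq: "words n k = {w. set w \<subseteq> {..<n} \<and> length w = k}"
  by (auto simp: words_def word_over_def)

lemma finite_words [simp]: "finite (words n k)"
  unfolding words_eq by (rule finite_lists_length_eq) simp

lemma card_words: "card (words n k) = n ^ k"
  unfolding words_eq using card_lists_length_eq[of "{..<n}" k] by simp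

definition avoiding :: "nat \<Rightarrow> nat list \<Rightarrow> nat \<Rightarrow> nat list set" where
  "avoiding n Q k = {w \<in> words n k. \<not> sublist Q w}"

lemma finite_avoiding [simp]: "finite (avoiding n Q k)"
  by (simp add: avoiding_def)

text \<open>Cut a word into blocks of length \<open>m\<close>: none of the full blocks may equal \<open>Q\<close>.\<close>
lemma card_avoiding_le:
  assumes Q: "Q \<in> words n m" and "0 < m"
  shows "card (avoiding n Q k) \<le> (n ^ m - 1) ^ (k div m) * n ^ (k mod m)"
proof (induction k rule: less_induct)
  case (less k)
  show ?case
  proof (cases "k < m")
    case True
    have "card (avoiding n Q k) \<le> card (words n k)"
      unfolding avoiding_def by (rule card_mono) auto
    then show ?thesis using True by (simp add: card_words)
  next
    case False
    then obtain j where k: "k = m + j" using le_Suc_ex not_less by blast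
    have "avoiding n Q k \<subseteq> (\<lambda>(u, v). u @ v) ` ((words n m - {Q}) \<times> avoiding n Q j)"
    proof
      fix w assume w: "w \<in> avoiding n Q k"
      have "\<not> sublist Q w" using w by (simp add: avoiding_def)
      moreover have "sublist (take m w) w" "sublist (drop m w) w"
        by (simp_all add: prefix_imp_sublist suffix_imp_sublist)
      ultimately have "take m w \<noteq> Q" "\<not> sublist Q (drop m w)"
        by (auto dest: sublist_order.order.trans)
      then have "(take m w, drop m w) \<in> (words n m - {Q}) \<times> avoiding n Q j"
        using w k unfolding avoiding_def words_eq by (auto dest: in_set_takeD in_set_dropD)
      then show "w \<in> (\<lambda>(u, v). u @ v) ` ((words n m - {Q}) \<times> avoiding n Q j)"
        by (auto intro: image_eqI[where x = "(take m w, drop m w)"])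
    qed
    then have "card (avoiding n Q k) \<le> card ((\<lambda>(u, v). u @ v) ` ((words n m - {Q}) \<times> avoiding n Q j))"
      by (rule card_mono[rotated]) simp
    also have "\<dots> \<le> card ((words n m - {Q}) \<times> avoiding n Q j)"
      by (rule card_image_le) simp
    also have "\<dots> = (n ^ m - 1) * card (avoiding n Q j)"
      using Q by (simp add: card_cartesian_product card_words)
    also have "\<dots> \<le> (n ^ m - 1) * ((n ^ m - 1) ^ (j div m) * n ^ (j mod m))"
      using less.IH[of j] k \<open>0 < m\<close> by simp
    also have "\<dots> = (n ^ m - 1) ^ (k div m) * n ^ (k mod m)"
      using k \<open>0 < m\<close> by simp
    finally show ?thesis .
  qed
qed

lemma mem_UD_three:
  "C \<in> UD n [l1, l2, l3] \<longleftrightarrow>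
    (\<exists>x y w. C = [x, y, w] \<and> length x = l1 \<and> length y = l2 \<and> length w = l3 \<and> is_code n [x, y, w])"
proof
  assume C: "C \<in> UD n [l1, l2, l3]"
  then obtain x y w where "C = [x, y, w]"
    unfolding UD_def by (auto simp: numeral_3_eq_3 length_Suc_conv)
  with C show "\<exists>x y w. C = [x, y, w] \<and> length x = l1 \<and> length y = l2 \<and> length w = l3 \<and> is_code n [x, y, w]"
    unfolding UD_def by (auto dest: spec[of _ 0] spec[of _ 1] spec[of _ 2])
qed (auto simp: UD_def less_Suc_eq)

lemma not_is_code_square: "\<not> is_code n [x, x @ x, w]"
  unfolding is_code_def
  by (intro notI, elim conjE, drule spec[of _ "[1]"], drule spec[of _ "[0, 0]"]) simp

lemma UD_1_2_subset:
  "UD n [1, 2, c] \<subseteq> (\<lambda>(x, y, w). [x, y, w]) ` (SIGMA x:words n 1. (words n 2 - {x @ x}) \<times> words n c)"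
proof
  fix C assume "C \<in> UD n [1, 2, c]"
  then obtain x y w where C: "C = [x, y, w]" "length x = 1" "length y = 2" "length w = c"
    and code: "is_code n [x, y, w]"
    unfolding mem_UD_three by blast
  then have "y \<noteq> x @ x" using not_is_code_square by blast
  moreover have "word_over n x" "word_over n y" "word_over n w"
    using code by (simp_all add: is_code_def)
  ultimately show "C \<in> (\<lambda>(x, y, w). [x, y, w]) ` (SIGMA x:words n 1. (words n 2 - {x @ x}) \<times> words n c)"
    using C by (intro image_eqI[where x = "(x, y, w)"]) (auto simp: words_def)
qed

lemma finite_UD_1_2: "finite (UD n [1, 2, c])"
  by (rule finite_subset[OF UD_1_2_subset]) auto

lemma card_UD_1_2_le: "card (UD n [1, 2, c]) \<le> n * (n ^ 2 - 1) * n ^ c"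
proof -
  have "card (UD n [1, 2, c])
      \<le> card ((\<lambda>(x, y, w). [x, y, w]) ` (SIGMA x:words n 1. (words n 2 - {x @ x}) \<times> words n c))"
    by (rule card_mono[OF _ UD_1_2_subset]) auto
  also have "\<dots> \<le> card (SIGMA x:words n 1. (words n 2 - {x @ x}) \<times> words n c)"
    by (rule card_image_le) auto
  also have "\<dots> = (\<Sum>x\<in>words n 1. card ((words n 2 - {x @ x}) \<times> words n c))"
    by (simp add: card_SigmaI)
  also have "\<dots> = (\<Sum>x\<in>words n 1. (n ^ 2 - 1) * n ^ c)"
  proof (rule sum.cong)
    fix x assume "x \<in> words n 1"
    then have "x @ x \<in> words n 2" by (auto simp: words_def word_over_def)
    then show "card ((words n 2 - {x @ x}) \<times> words n c) = (n ^ 2 - 1) * n ^ c"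
      by (simp add: card_cartesian_product card_Diff_singleton card_words)
  qed simp
  also have "\<dots> = n * (n ^ 2 - 1) * n ^ c" by (simp add: card_words)
  finally show ?thesis .
qed

text \<open>The two-letter marker \<open>bb\<close> needed when \<open>y \<in> {ab, ba}\<close> is padded to length 3, so that
  one avoidance bound covers all cases.\<close>
definition marker :: "nat \<Rightarrow> nat list \<Rightarrow> nat list" where
  "marker a y = (if y = [1 - a, 1 - a] then [a, 1 - a, a] else [1 - a, 1 - a, 1 - a])"

lemma marker_in_words: "a < 2 \<Longrightarrow> marker a y \<in> words 2 3"
  by (auto simp: marker_def words_def word_over_def)

lemma uniquely_decodable_binary:
  assumes "a < 2" "y \<in> words 2 2" "y \<noteq> [a, a]" "sublist (marker a y) w"
  shows "uniquely_decodable [[a], y, w]"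
proof -
  let ?b = "1 - a"
  have "a \<noteq> ?b" using \<open>a < 2\<close> by presburger
  obtain p q where "y = [p, q]" "p < 2" "q < 2"
    using \<open>y \<in> words 2 2\<close> by (auto simp: words_def word_over_def numeral_2_eq_2 length_Suc_conv)
  then consider "y = [?b, ?b]" | "y = [a, ?b]" | "y = [?b, a]"
    using \<open>a < 2\<close> \<open>y \<noteq> [a, a]\<close> by fastforce
  then show ?thesis
  proof cases
    case 1
    then show ?thesis
      using uniquely_decodable_a_bb[OF \<open>a \<noteq> ?b\<close>] assms(4) by (simp add: marker_def)
  next
    case 2
    then have "sublist [?b, ?b] w"
      using assms(4) \<open>a \<noteq> ?b\<close> by (auto simp: marker_def intro: sublist_order.order.trans[rotated])
    then show ?thesis using uniquely_decodable_a_ab[OF \<open>a \<noteq> ?b\<close>] 2 by simp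
  next
    case 3
    then have "sublist [?b, ?b] w"
      using assms(4) \<open>a \<noteq> ?b\<close> by (auto simp: marker_def intro: sublist_order.order.trans[rotated])
    then show ?thesis using uniquely_decodable_a_ba[OF \<open>a \<noteq> ?b\<close>] 3 by simp
  qed
qed

lemma UD_2_1_2_supset:
  "(\<lambda>(a, y, w). [[a], y, w]) `
      (SIGMA a:{..<2}. SIGMA y:words 2 2 - {[a, a]}. {w \<in> words 2 c. sublist (marker a y) w})
    \<subseteq> UD 2 [1, 2, c]"
proof
  fix C
  assume "C \<in> (\<lambda>(a, y, w). [[a], y, w]) `
      (SIGMA a:{..<2}. SIGMA y:words 2 2 - {[a, a]}. {w \<in> words 2 c. sublist (marker a y) w})"
  then obtain a y w where "C = [[a], y, w]" "a < 2" "y \<in> words 2 2" "y \<noteq> [a, a]"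
    "w \<in> words 2 c" "sublist (marker a y) w"
    by auto
  then have "is_code 2 [[a], y, w]"
    using uniquely_decodable_binary by (intro is_code_if_uniquely_decodable) (auto simp: words_def word_over_def)
  then show "C \<in> UD 2 [1, 2, c]"
    unfolding mem_UD_three using \<open>C = _\<close> \<open>y \<in> words 2 2\<close> \<open>w \<in> words 2 c\<close> by (auto simp: words_def)
qed

lemma card_words_2_2_minus:
  assumes "a < 2" shows "card (words 2 2 - {[a, a]}) = 3"
proof -
  have "[a, a] \<in> words 2 2" using assms by (simp add: words_def word_over_def)
  then show ?thesis by (simp add: card_Diff_singleton card_words)
qed

lemma card_containing_marker:
  assumes "a < 2"
  shows "2 ^ c \<le> card {w \<in> words 2 c. sublist (marker a y) w} + 7 ^ (c div 3) * 2 ^ (c mod 3)"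
proof -
  have "card (avoiding 2 (marker a y) c) \<le> 7 ^ (c div 3) * 2 ^ (c mod 3)"
    using card_avoiding_le[OF marker_in_words[OF assms]] by simp
  moreover have "{w \<in> words 2 c. sublist (marker a y) w} = words 2 c - avoiding 2 (marker a y) c"
    by (auto simp: avoiding_def)
  moreover have "card (words 2 c - avoiding 2 (marker a y) c) = 2 ^ c - card (avoiding 2 (marker a y) c)"
    by (subst card_Diff_subset) (auto simp: avoiding_def card_words)
  ultimately show ?thesis by simp
qed

lemma card_UD_2_1_2_ge: "6 * 2 ^ c \<le> card (UD 2 [1, 2, c]) + 6 * (7 ^ (c div 3) * 2 ^ (c mod 3))"
proof -
  let ?N = "7 ^ (c div 3) * 2 ^ (c mod 3) :: nat"
  let ?S = "SIGMA a:{..<2}. SIGMA y:words 2 2 - {[a, a]}. {w \<in> words 2 c. sublist (marker a y) w}"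
  have "6 * 2 ^ c = (\<Sum>a<2. \<Sum>y\<in>words 2 2 - {[a, a]}. 2 ^ c :: nat)"
    by (simp add: card_words_2_2_minus)
  also have "\<dots> \<le> (\<Sum>a<2. \<Sum>y\<in>words 2 2 - {[a, a]}. card {w \<in> words 2 c. sublist (marker a y) w} + ?N)"
    by (intro sum_mono card_containing_marker) simp
  also have "\<dots> = card ?S + 6 * ?N"
    by (simp add: sum.distrib card_SigmaI card_words_2_2_minus)
  also have "card ?S = card ((\<lambda>(a, y, w). [[a], y, w]) ` ?S)"
    by (rule card_image[symmetric]) (auto simp: inj_on_def)
  also have "\<dots> \<le> card (UD 2 [1, 2, c])"
    by (rule card_mono[OF finite_UD_1_2 UD_2_1_2_supset])
  finally show ?thesis by simp
qed

lemma PR_2_1_2: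
  assumes "2 \<le> c"
  shows "PR 2 [1, 2, c] =
    (\<lambda>(a, q, t). [[a], [1 - a, q], [1 - a, 1 - q] @ t]) ` ({..<2} \<times> {..<2} \<times> words 2 (c - 2))"
    (is "_ = ?f ` ?D")
proof
  show "PR 2 [1, 2, c] \<subseteq> ?f ` ?D"
  proof
    fix C assume "C \<in> PR 2 [1, 2, c]"
    then obtain x y w where C: "C = [x, y, w]" "length x = 1" "length y = 2" "length w = c"
      and code: "is_prefix_code 2 [x, y, w]"
      unfolding PR_def mem_UD_three by blast
    obtain a where x: "x = [a]" using C(2) by (auto simp: length_Suc_conv)
    obtain p q where y: "y = [p, q]" using C(3) by (auto simp: numeral_2_eq_2 length_Suc_conv)
    obtain w0 w1 t where w: "w = w0 # w1 # t" using C(4) \<open>2 \<le> c\<close>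
      by (cases w; cases "tl w") auto
    have prefix_free: "\<forall>i<3. \<forall>j<3. prefix ([x, y, w] ! i) ([x, y, w] ! j) \<longleftrightarrow> i = j"
      using code unfolding is_prefix_code_def by simp
    have "\<not> prefix x y" "\<not> prefix x w" "\<not> prefix y w"
      using prefix_free[rule_format, of 0 1] prefix_free[rule_format, of 0 2]
        prefix_free[rule_format, of 1 2]
      by simp_all
    moreover have "a < 2" "p < 2" "q < 2" "w0 < 2" "w1 < 2" "word_over 2 t"
      using code x y w unfolding is_prefix_code_def is_code_def word_over_def by auto
    ultimately have "p = 1 - a" "w0 = 1 - a" "w1 = 1 - q"
      using x y w by auto
    with \<open>a < 2\<close> \<open>q < 2\<close> \<open>word_over 2 t\<close> show "C \<in> ?f ` ?D"
      using C x y w by (intro image_eqI[where x = "(a, q, t)"]) (auto simp: words_def)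
  qed
next
  show "?f ` ?D \<subseteq> PR 2 [1, 2, c]"
  proof clarify
    fix a q :: nat and t assume "a < 2" "q < 2" "t \<in> words 2 (c - 2)"
    moreover from this have "1 - a \<noteq> a" "1 - q \<noteq> q" by presburger+
    ultimately have "is_prefix_code 2 [[a], [1 - a, q], [1 - a, 1 - q] @ t]"
      by (intro is_prefix_code_if_prefix_free) (auto simp: less_Suc_eq words_def word_over_def)
    then show "[[a], [1 - a, q], [1 - a, 1 - q] @ t] \<in> PR 2 [1, 2, c]"
      using \<open>2 \<le> c\<close> \<open>t \<in> words 2 (c - 2)\<close>
      unfolding PR_def mem_UD_three is_prefix_code_def by (auto simp: words_def)
  qed
qed

lemma card_PR_2_1_2: "2 \<le> c \<Longrightarrow> card (PR 2 [1, 2, c]) = 2 ^ c"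
proof -
  assume "2 \<le> c"
  have "card (PR 2 [1, 2, c]) = card ({..<2::nat} \<times> {..<2::nat} \<times> words 2 (c - 2))"
    unfolding PR_2_1_2[OF \<open>2 \<le> c\<close>] by (rule card_image) (auto simp: inj_on_def)
  also have "\<dots> = 2 ^ 2 * 2 ^ (c - 2)" by (simp add: card_cartesian_product card_words)
  also have "\<dots> = 2 ^ (2 + (c - 2))" by (simp only: power_add)
  also have "\<dots> = 2 ^ c" using \<open>2 \<le> c\<close> by (simp only: le_add_diff_inverse)
  finally show ?thesis .
qed

lemma avoidance_bound_over_power: "real (7 ^ (c div 3) * 2 ^ (c mod 3)) / 2 ^ c = (7 / 8) ^ (c div 3)"
proof -
  have "(2::real) ^ c = 2 ^ (3 * (c div 3) + c mod 3)" by simp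
  also have "\<dots> = 8 ^ (c div 3) * 2 ^ (c mod 3)" unfolding power_add power_mult by simp
  finally have "(2::real) ^ c = 8 ^ (c div 3) * 2 ^ (c mod 3)" .
  then show ?thesis by (simp add: power_divide)
qed

lemma card_UD_2_1_2_asymptotic: "(\<lambda>c. real (card (UD 2 [1, 2, c])) / 2 ^ c) \<longlonglongrightarrow> 6"
proof (rule tendsto_sandwich)
  show "\<forall>\<^sub>F c in sequentially. 6 - 6 * (7 / 8) ^ (c div 3) \<le> real (card (UD 2 [1, 2, c])) / 2 ^ c"
  proof (intro always_eventually allI)
    fix c
    define N where "N = real (7 ^ (c div 3) * 2 ^ (c mod 3))"
    have "6 * 2 ^ c \<le> real (card (UD 2 [1, 2, c])) + 6 * N"
      using of_nat_mono[OF card_UD_2_1_2_ge[of c], where 'a = real] unfolding N_def by simp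
    then have "(6 * 2 ^ c - 6 * N) / 2 ^ c \<le> real (card (UD 2 [1, 2, c])) / 2 ^ c"
      by (intro divide_right_mono) simp_all
    then have "6 - 6 * (N / 2 ^ c) \<le> real (card (UD 2 [1, 2, c])) / 2 ^ c"
      by (simp add: diff_divide_distrib)
    then show "6 - 6 * (7 / 8) ^ (c div 3) \<le> real (card (UD 2 [1, 2, c])) / 2 ^ c"
      unfolding N_def avoidance_bound_over_power .
  qed
  show "\<forall>\<^sub>F c in sequentially. real (card (UD 2 [1, 2, c])) / 2 ^ c \<le> 6"
  proof (intro always_eventually allI)
    fix c
    have "real (card (UD 2 [1, 2, c])) \<le> 6 * 2 ^ c"
      using of_nat_mono[OF card_UD_1_2_le[of 2 c], where 'a = real] by simp
    then show "real (card (UD 2 [1, 2, c])) / 2 ^ c \<le> 6" by (simp add: divide_le_eq)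
  qed
  have "(\<lambda>c. (7 / 8 :: real) ^ (c div 3)) \<longlonglongrightarrow> 0"
    by (rule filterlim_compose[OF LIMSEQ_power_zero filterlim_at_top_div_const_nat]) simp_all
  from tendsto_diff[OF tendsto_const tendsto_mult[OF tendsto_const this]]
  show "(\<lambda>c. 6 - 6 * (7 / 8 :: real) ^ (c div 3)) \<longlonglongrightarrow> 6" by simp
qed simp

theorem theorem6:
  shows "(\<lambda>c::nat. rho 2 [1, 2, c]) \<longlonglongrightarrow> 1 / 6"
proof -
  have "(\<lambda>c. 1 / (real (card (UD 2 [1, 2, c])) / 2 ^ c)) \<longlonglongrightarrow> 1 / 6"
    by (rule tendsto_divide[OF tendsto_const card_UD_2_1_2_asymptotic]) simp
  moreover have "\<forall>\<^sub>F c in sequentially. 1 / (real (card (UD 2 [1, 2, c])) / 2 ^ c) = rho 2 [1, 2, c]"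
    unfolding eventually_sequentially rho_def using card_PR_2_1_2 by (intro exI[of _ 2]) auto
  ultimately show ?thesis by (rule Lim_transform_eventually)
qed

end
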